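(* Let $(A,\gamma)$ be a partially ordered set. If $\mathrm{hsdim}(A,\gamma)=1$, then $\gamma$ is a half-space, and $\dim(A,\gamma)=1$ if $\gamma$ is a linear order while $\dim(A,\gamma)=2$ if $\gamma$ is not a linear order. If $\mathrm{hsdim}(A,\gamma)\ge2$, then $\dim(A,\gamma)=\mathrm{hsdim}(A,\gamma)$.
   Context: A quasiorder on $A$ is a reflexive and transitive relation; $\Delta_A=\{(a,a)\mid a\in A\}$. A quasiorder $\alpha$ on $A$ is a half-space if there is a quasiorder $\beta$ on $A$ with $\alpha\cup\beta=A\times A$ and $\alpha\cap\beta=\Delta_A$. A half-space realizer of a quasiorder $\gamma$ on $A$ is a set $\{\alpha_i\mid i\in I\}$ of half-spaces on $A$ with $\bigcap_{i\in I}\alpha_i=\gamma$; $\mathrm{hsdim}(A,\gamma)$ is the minimum cardinality of a half-space realizer. $\dim(A,\gamma)$ is the order dimension: the least cardinality of a set of linear extensions of $\gamma$ whose intersection is $\gamma$. *)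

theory Defs
  imports Main
begin

definition quasiorder_on :: "'a set \<Rightarrow> 'a rel \<Rightarrow> bool" where
  "quasiorder_on A r \<longleftrightarrow> r \<subseteq> A \<times> A \<and> refl_on A r \<and> trans r"

definition partial_order_on' :: "'a set \<Rightarrow> 'a rel \<Rightarrow> bool" where
  "partial_order_on' A r \<longleftrightarrow> quasiorder_on A r \<and> antisym r"

definition linear_order_on' :: "'a set \<Rightarrow> 'a rel \<Rightarrow> bool" where
  "linear_order_on' A r \<longleftrightarrow> partial_order_on' A r \<and> total_on A r"

definition half_space :: "'a set \<Rightarrow> 'a rel \<Rightarrow> bool" where
  "half_space A \<alpha> \<longleftrightarrow> quasiorder_on A \<alpha> \<and>
     (\<exists>\<beta>. quasiorder_on A \<beta> \<and> \<alpha> \<union> \<beta> = A \<times> A \<and> \<alpha> \<inter> \<beta> = Id_on A)"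

text \<open>Intersection of a family of relations on A (the empty family gives A \<times> A).\<close>
definition rel_Inter :: "'a set \<Rightarrow> 'a rel set \<Rightarrow> 'a rel" where
  "rel_Inter A X = (A \<times> A) \<inter> \<Inter> X"

definition hs_realizer :: "'a set \<Rightarrow> 'a rel \<Rightarrow> 'a rel set \<Rightarrow> bool" where
  "hs_realizer A \<gamma> X \<longleftrightarrow> (\<forall>\<alpha>\<in>X. half_space A \<alpha>) \<and> rel_Inter A X = \<gamma>"

definition linear_extension :: "'a set \<Rightarrow> 'a rel \<Rightarrow> 'a rel \<Rightarrow> bool" where
  "linear_extension A \<gamma> L \<longleftrightarrow> linear_order_on' A L \<and> \<gamma> \<subseteq> L"

definition order_realizer :: "'a set \<Rightarrow> 'a rel \<Rightarrow> 'a rel set \<Rightarrow> bool" where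
  "order_realizer A \<gamma> X \<longleftrightarrow> (\<forall>L\<in>X. linear_extension A \<gamma> L) \<and> rel_Inter A X = \<gamma>"

definition hsdim :: "'a set \<Rightarrow> 'a rel \<Rightarrow> 'a rel rel" where
  "hsdim A \<gamma> = card_of (SOME X. hs_realizer A \<gamma> X \<and>
      (\<forall>Y. hs_realizer A \<gamma> Y \<longrightarrow> (card_of X, card_of Y) \<in> ordLeq))"

definition odim :: "'a set \<Rightarrow> 'a rel \<Rightarrow> 'a rel rel" where
  "odim A \<gamma> = card_of (SOME X. order_realizer A \<gamma> X \<and>
      (\<forall>Y. order_realizer A \<gamma> Y \<longrightarrow> (card_of X, card_of Y) \<in> ordLeq))"

end

(*
  A linear extension is a half-space (its converse is the complementary quasiorder), so
  hsdim <= dim.  Conversely, the complement of a half-space \<alpha> is transitive off the diagonal,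
  so \<alpha>-incomparability is transitive; hence two linear orders T and S combine into a linear
  order that follows the strict part of \<alpha> and uses T on \<alpha>-equivalent and S on
  \<alpha>-incomparable pairs.  Doing this for every member of a half-space realizer of \<gamma>, with
  the orders S chosen so that every pair left unordered by \<gamma> is reversed somewhere, gives a
  realizer by linear extensions of no larger cardinality; the choice of S needs two distinct
  members.  If \<gamma> is itself a half-space, S = M and S = M^-1 for one linear extension M give
  a realizer of size two, and a realizer of size at most one forces \<gamma> to be linear.
*)
theory Submission
  imports Defs "HOL-Library.Equipollence"
begin

unbundle cardinal_syntax

lemmas order_on'_defs = linear_order_on'_def partial_order_on'_def quasiorder_on_def

lemma linear_order_on'_converse:
  "linear_order_on' A L \<Longrightarrow> linear_order_on' A (L\<inverse>)"
  by (auto simp: order_on'_defs refl_on_def total_on_def)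

lemma half_space_if_linear_order_on':
  assumes "linear_order_on' A L"
  shows "half_space A L"
  unfolding half_space_def
proof (intro conjI exI)
  show "quasiorder_on A L" "quasiorder_on A (L\<inverse>)"
    using assms linear_order_on'_converse[OF assms] by (auto simp: order_on'_defs)
  show "L \<union> L\<inverse> = A \<times> A"
    using assms unfolding order_on'_defs refl_on_def total_on_def by fastforce
  show "L \<inter> L\<inverse> = Id_on A"
    using assms unfolding order_on'_defs refl_on_def antisym_def by fastforce
qed

lemma hs_realizer_if_order_realizer:
  "order_realizer A \<gamma> X \<Longrightarrow> hs_realizer A \<gamma> X"
  unfolding order_realizer_def hs_realizer_def linear_extension_def
  using half_space_if_linear_order_on' by blast

lemma half_space_cotrans:
  assumes "half_space A \<alpha>" "x \<in> A" "y \<in> A" "z \<in> A"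
    and "(x, y) \<notin> \<alpha>" "(y, z) \<notin> \<alpha>" "x \<noteq> z"
  shows "(x, z) \<notin> \<alpha>"
proof -
  obtain \<beta> where \<beta>: "quasiorder_on A \<beta>" "\<alpha> \<union> \<beta> = A \<times> A" "\<alpha> \<inter> \<beta> = Id_on A"
    using assms(1) unfolding half_space_def by blast
  have "(x, y) \<in> \<beta>" "(y, z) \<in> \<beta>"
    using assms(2-6) \<beta>(2) by blast+
  then have "(x, z) \<in> \<beta>"
    using \<beta>(1) unfolding quasiorder_on_def by (meson transD)
  then show ?thesis
    using \<beta>(3) \<open>x \<noteq> z\<close> by (metis IntI Id_on_iff)
qed

lemma partial_order_on'_add_pair:
  assumes r: "partial_order_on' A r" and "x \<in> A" "y \<in> A" "(y, x) \<notin> r"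
  shows "partial_order_on' A (r \<union> {(a, b). (a, x) \<in> r \<and> (y, b) \<in> r})"
    and "(x, y) \<in> r \<union> {(a, b). (a, x) \<in> r \<and> (y, b) \<in> r}"
proof -
  let ?r' = "r \<union> {(a, b). (a, x) \<in> r \<and> (y, b) \<in> r}"
  have "r \<subseteq> A \<times> A" "refl_on A r" "trans r" "antisym r"
    using r by (auto simp: order_on'_defs)
  then have "?r' \<subseteq> A \<times> A" "refl_on A ?r'"
    by (auto simp: refl_on_def)
  moreover have "trans ?r'"
    using \<open>trans r\<close> unfolding trans_def by blast
  moreover have "antisym ?r'"
    using \<open>trans r\<close> \<open>antisym r\<close> \<open>(y, x) \<notin> r\<close> unfolding trans_def antisym_def by blast
  ultimately show "partial_order_on' A ?r'"
    by (simp add: order_on'_defs)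
  show "(x, y) \<in> ?r'"
    using \<open>refl_on A r\<close> assms(2,3) by (auto simp: refl_on_def)
qed

theorem Szpilrajn:
  assumes "partial_order_on' A \<gamma>"
  shows "\<exists>L. linear_extension A \<gamma> L"
proof -
  define P where "P = {r. partial_order_on' A r \<and> \<gamma> \<subseteq> r}"
  have "\<Union>C \<in> P" if "C \<noteq> {}" and "subset.chain P C" for C
  proof -
    have "C \<subseteq> P" and "chain\<^sub>\<subseteq> C"
      using that(2) by (auto simp: subset_chain_def chain_subset_def)
    then have "trans (\<Union>C)" "antisym (\<Union>C)"
      using chain_subset_trans_Union chain_subset_antisym_Union by (auto simp: P_def order_on'_defs)
    moreover have "\<Union>C \<subseteq> A \<times> A" "refl_on A (\<Union>C)" "\<gamma> \<subseteq> \<Union>C"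
      using \<open>C \<subseteq> P\<close> \<open>C \<noteq> {}\<close> unfolding P_def order_on'_defs refl_on_def by blast+
    ultimately show ?thesis
      by (simp add: P_def order_on'_defs)
  qed
  moreover have "P \<noteq> {}"
    using assms by (auto simp: P_def)
  ultimately obtain L where "L \<in> P" and max: "\<And>r. r \<in> P \<Longrightarrow> L \<subseteq> r \<Longrightarrow> r = L"
    using subset_Zorn_nonempty[of P] by blast
  have "total_on A L"
  proof (rule total_onI, rule ccontr)
    fix x y assume "x \<in> A" "y \<in> A" "x \<noteq> y" "\<not> ((x, y) \<in> L \<or> (y, x) \<in> L)"
    then show False
      using partial_order_on'_add_pair[of A L x y] \<open>L \<in> P\<close> max[of "L \<union> _"]
      by (auto simp: P_def)
  qed
  with \<open>L \<in> P\<close> show ?thesis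
    by (auto simp: P_def linear_extension_def linear_order_on'_def)
qed

lemma linear_extension_avoiding:
  assumes "partial_order_on' A \<gamma>" "x \<in> A" "y \<in> A" "(x, y) \<notin> \<gamma>"
  shows "\<exists>L. linear_extension A \<gamma> L \<and> (x, y) \<notin> L"
proof -
  let ?\<gamma>' = "\<gamma> \<union> {(a, b). (a, y) \<in> \<gamma> \<and> (x, b) \<in> \<gamma>}"
  obtain L where L: "linear_extension A ?\<gamma>' L"
    using Szpilrajn partial_order_on'_add_pair(1)[OF assms(1,3,2,4)] by blast
  then have "(y, x) \<in> L" "x \<noteq> y"
    using partial_order_on'_add_pair(2)[OF assms(1,3,2,4)] assms(1,4)
    by (auto simp: linear_extension_def order_on'_defs refl_on_def)
  with L show ?thesis
    by (auto simp: linear_extension_def order_on'_defs antisym_def)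
qed

lemma order_realizerI:
  assumes "\<gamma> \<subseteq> A \<times> A" and "\<And>L. L \<in> X \<Longrightarrow> linear_extension A \<gamma> L"
    and "\<And>x y. x \<in> A \<Longrightarrow> y \<in> A \<Longrightarrow> (x, y) \<notin> \<gamma> \<Longrightarrow> \<exists>L\<in>X. (x, y) \<notin> L"
  shows "order_realizer A \<gamma> X"
  using assms unfolding order_realizer_def rel_Inter_def linear_extension_def by blast

lemma order_realizer_linear_extensions:
  assumes "partial_order_on' A \<gamma>"
  shows "order_realizer A \<gamma> {L. linear_extension A \<gamma> L}"
  using assms linear_extension_avoiding[OF assms]
  by (intro order_realizerI) (auto simp: order_on'_defs)

definition hs_lex :: "'a set \<Rightarrow> 'a rel \<Rightarrow> 'a rel \<Rightarrow> 'a rel \<Rightarrow> 'a rel" where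
  "hs_lex A \<alpha> T S = {(x, y). x \<in> A \<and> y \<in> A \<and>
     ((x, y) \<in> \<alpha> \<and> (y, x) \<notin> \<alpha> \<or>
      (x, y) \<in> \<alpha> \<and> (y, x) \<in> \<alpha> \<and> (x, y) \<in> T \<or>
      (x, y) \<notin> \<alpha> \<and> (y, x) \<notin> \<alpha> \<and> (x, y) \<in> S)}"

lemma mem_hs_lex:
  "(x, y) \<in> hs_lex A \<alpha> T S \<longleftrightarrow> x \<in> A \<and> y \<in> A \<and>
     ((x, y) \<in> \<alpha> \<and> (y, x) \<notin> \<alpha> \<or>
      (x, y) \<in> \<alpha> \<and> (y, x) \<in> \<alpha> \<and> (x, y) \<in> T \<or>
      (x, y) \<notin> \<alpha> \<and> (y, x) \<notin> \<alpha> \<and> (x, y) \<in> S)"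
  by (simp add: hs_lex_def)

lemma trans_hs_lex:
  assumes \<alpha>: "half_space A \<alpha>" and "refl_on A T" "trans T" "trans S"
  shows "trans (hs_lex A \<alpha> T S)"
proof (rule transI)
  fix x y z
  assume xy: "(x, y) \<in> hs_lex A \<alpha> T S" and yz: "(y, z) \<in> hs_lex A \<alpha> T S"
  then have A: "x \<in> A" "y \<in> A" "z \<in> A"
    by (auto simp: mem_hs_lex)
  have "refl_on A \<alpha>" "trans \<alpha>"
    using \<alpha> by (auto simp: half_space_def quasiorder_on_def)
  show "(x, z) \<in> hs_lex A \<alpha> T S"
  proof (cases "x = y \<or> y = z \<or> x = z")
    case True
    then show ?thesis
      using xy yz A \<open>refl_on A \<alpha>\<close> \<open>refl_on A T\<close> by (auto simp: mem_hs_lex refl_on_def)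
  next
    case False
    txt \<open>For pairwise distinct points, transitivity of \<open>\<alpha>\<close> and of its complement,
      instantiated at all orderings of \<open>x, y, z\<close>, leaves a propositional tautology.\<close>
    have tr: "(u, v) \<in> \<alpha> \<Longrightarrow> (v, w) \<in> \<alpha> \<Longrightarrow> (u, w) \<in> \<alpha>" for u v w
      using \<open>trans \<alpha>\<close> by (meson transD)
    note co = half_space_cotrans[OF \<alpha>]
    from xy yz False A show ?thesis
      unfolding mem_hs_lex
      using tr[of x y z] tr[of y z x] tr[of z x y] tr[of x z y] tr[of z y x] tr[of y x z]
        co[OF A(1,2,3)] co[OF A(2,3,1)] co[OF A(3,1,2)]
        co[OF A(1,3,2)] co[OF A(3,2,1)] co[OF A(2,1,3)]
        transD[OF \<open>trans T\<close>, of x y z] transD[OF \<open>trans S\<close>, of x y z]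
      by blast
  qed
qed

lemma linear_order_on'_hs_lex:
  assumes "half_space A \<alpha>" "linear_order_on' A T" "linear_order_on' A S"
  shows "linear_order_on' A (hs_lex A \<alpha> T S)"
proof -
  have "refl_on A \<alpha>"
    using assms(1) by (auto simp: half_space_def quasiorder_on_def)
  then have "hs_lex A \<alpha> T S \<subseteq> A \<times> A" "refl_on A (hs_lex A \<alpha> T S)"
    "antisym (hs_lex A \<alpha> T S)" "total_on A (hs_lex A \<alpha> T S)"
    using assms(2,3) by (auto simp: hs_lex_def order_on'_defs refl_on_def antisym_def total_on_def)
  moreover have "trans (hs_lex A \<alpha> T S)"
    using assms by (intro trans_hs_lex) (auto simp: order_on'_defs)
  ultimately show ?thesis
    by (simp add: order_on'_defs)
qed

lemma subset_hs_lex: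
  assumes "half_space A \<alpha>" "\<gamma> \<subseteq> \<alpha>" "\<gamma> \<subseteq> T"
  shows "\<gamma> \<subseteq> hs_lex A \<alpha> T S"
proof -
  have "\<alpha> \<subseteq> A \<times> A"
    using assms(1) by (auto simp: half_space_def quasiorder_on_def)
  with assms(2,3) show ?thesis
    by (auto simp: hs_lex_def)
qed

lemma linear_extension_hs_lex:
  assumes "half_space A \<alpha>" "\<gamma> \<subseteq> \<alpha>" "linear_extension A \<gamma> T" "linear_order_on' A S"
  shows "linear_extension A \<gamma> (hs_lex A \<alpha> T S)"
  using assms subset_hs_lex[OF assms(1,2)] linear_order_on'_hs_lex[OF assms(1) _ assms(4)]
  by (simp add: linear_extension_def)

lemma linear_order_on'_asymD:
  "linear_order_on' A L \<Longrightarrow> (y, x) \<in> L \<Longrightarrow> x \<noteq> y \<Longrightarrow> (x, y) \<notin> L"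
  by (auto simp: order_on'_defs antisym_def)

lemma linear_order_on'_totalD:
  "linear_order_on' A L \<Longrightarrow> x \<in> A \<Longrightarrow> y \<in> A \<Longrightarrow> x \<noteq> y \<Longrightarrow> (x, y) \<in> L \<or> (y, x) \<in> L"
  by (auto simp: linear_order_on'_def total_on_def)

lemma order_realizer_pair_if_half_space:
  assumes "partial_order_on' A \<gamma>" "half_space A \<gamma>"
  shows "\<exists>L1 L2. order_realizer A \<gamma> {L1, L2}"
proof -
  obtain M where M: "linear_extension A \<gamma> M"
    using Szpilrajn[OF assms(1)] by blast
  have lin: "linear_order_on' A M" "linear_order_on' A (M\<inverse>)"
    using M linear_order_on'_converse by (auto simp: linear_extension_def)
  let ?L1 = "hs_lex A \<gamma> M M" and ?L2 = "hs_lex A \<gamma> M (M\<inverse>)"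
  have ext: "linear_extension A \<gamma> ?L1" "linear_extension A \<gamma> ?L2"
    using linear_extension_hs_lex[OF assms(2) order.refl M] lin by auto
  have "order_realizer A \<gamma> {?L1, ?L2}"
  proof (rule order_realizerI)
    fix x y assume xy: "x \<in> A" "y \<in> A" "(x, y) \<notin> \<gamma>"
    then have "x \<noteq> y"
      using assms(1) by (auto simp: order_on'_defs refl_on_def)
    show "\<exists>L\<in>{?L1, ?L2}. (x, y) \<notin> L"
    proof (cases "(y, x) \<in> \<gamma>")
      case True
      then show ?thesis
        using xy by (auto simp: mem_hs_lex)
    next
      case False
      then show ?thesis
        using xy linear_order_on'_totalD[OF lin(1) xy(1,2) \<open>x \<noteq> y\<close>]
          linear_order_on'_asymD[OF lin(1) _ \<open>x \<noteq> y\<close>]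
        by (auto simp: mem_hs_lex)
    qed
  qed (use assms(1) ext in \<open>auto simp: order_on'_defs\<close>)
  then show ?thesis
    by blast
qed

text \<open>The members \<open>\<alpha> \<noteq> \<alpha>\<^sub>1\<close> break their incomparabilities by the reverse of \<open>B\<close>, which
  agrees with the order for \<open>\<alpha>\<^sub>1\<close> on \<open>\<alpha>\<^sub>1\<close>-comparable pairs; on \<open>\<alpha>\<^sub>1\<close>-incomparable
  pairs the order for \<open>\<alpha>\<^sub>1\<close> reverses the one for \<open>\<alpha>\<^sub>2\<close>.\<close>

definition hs_lex_family :: "'a set \<Rightarrow> 'a rel \<Rightarrow> 'a rel \<Rightarrow> 'a rel \<Rightarrow> 'a rel \<Rightarrow> 'a rel" where
  "hs_lex_family A M \<alpha>\<^sub>1 \<alpha>\<^sub>2 \<alpha> =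
     (let B = hs_lex A \<alpha>\<^sub>1 M M
      in hs_lex A \<alpha> M (if \<alpha> = \<alpha>\<^sub>1 then (hs_lex A \<alpha>\<^sub>2 M (B\<inverse>))\<inverse> else B\<inverse>))"

lemma linear_order_on'_hs_lex_family:
  assumes "half_space A \<alpha>\<^sub>1" "half_space A \<alpha>\<^sub>2" "half_space A \<alpha>" "linear_order_on' A M"
  shows "linear_order_on' A (hs_lex_family A M \<alpha>\<^sub>1 \<alpha>\<^sub>2 \<alpha>)"
proof -
  have "linear_order_on' A ((hs_lex A \<alpha>\<^sub>1 M M)\<inverse>)"
    using assms(1,4) by (intro linear_order_on'_converse linear_order_on'_hs_lex)
  then have "linear_order_on' A ((hs_lex A \<alpha>\<^sub>2 M ((hs_lex A \<alpha>\<^sub>1 M M)\<inverse>))\<inverse>)"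
    using assms(2,4) by (simp add: linear_order_on'_converse linear_order_on'_hs_lex)
  with \<open>linear_order_on' A ((hs_lex A \<alpha>\<^sub>1 M M)\<inverse>)\<close> show ?thesis
    using assms(3,4) by (simp add: hs_lex_family_def Let_def linear_order_on'_hs_lex)
qed

lemma hs_lex_family_reverses:
  assumes "half_space A \<alpha>\<^sub>1" "half_space A \<alpha>\<^sub>2" "\<alpha>\<^sub>1 \<noteq> \<alpha>\<^sub>2" "linear_order_on' A M"
    and "(x, y) \<notin> \<alpha>" "x \<noteq> y"
  shows "\<exists>\<alpha>'\<in>{\<alpha>, \<alpha>\<^sub>1, \<alpha>\<^sub>2}. (x, y) \<notin> hs_lex_family A M \<alpha>\<^sub>1 \<alpha>\<^sub>2 \<alpha>'"
proof -
  define F where "F = hs_lex_family A M \<alpha>\<^sub>1 \<alpha>\<^sub>2"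
  define B where "B = hs_lex A \<alpha>\<^sub>1 M M"
  have F1: "F \<alpha>\<^sub>1 = hs_lex A \<alpha>\<^sub>1 M ((F \<alpha>\<^sub>2)\<inverse>)"
    using assms(3) by (simp add: F_def B_def hs_lex_family_def Let_def)
  have F_other: "F \<beta> = hs_lex A \<beta> M (B\<inverse>)" if "\<beta> \<noteq> \<alpha>\<^sub>1" for \<beta>
    using that by (simp add: F_def B_def hs_lex_family_def Let_def)
  have lin: "linear_order_on' A (F \<alpha>\<^sub>1)" "linear_order_on' A (F \<alpha>\<^sub>2)"
    using assms(1,2,4) by (simp_all add: F_def linear_order_on'_hs_lex_family)
  have incomparable1: "(x, y) \<notin> F \<alpha>\<^sub>1 \<or> (x, y) \<notin> F \<alpha>\<^sub>2"
    if "(x, y) \<notin> \<alpha>\<^sub>1" "(y, x) \<notin> \<alpha>\<^sub>1"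
    using that linear_order_on'_asymD[OF lin(2) _ \<open>x \<noteq> y\<close>] by (auto simp: F1 mem_hs_lex)
  consider "(y, x) \<in> \<alpha>" | "\<alpha> = \<alpha>\<^sub>1" "(y, x) \<notin> \<alpha>"
    | "(x, y) \<notin> F \<alpha>" | "\<alpha> \<noteq> \<alpha>\<^sub>1" "(y, x) \<notin> \<alpha>" "(y, x) \<in> B"
    using assms(5) F_other[of \<alpha>] by (cases "\<alpha> = \<alpha>\<^sub>1") (auto simp: mem_hs_lex)
  then have "\<exists>\<alpha>'\<in>{\<alpha>, \<alpha>\<^sub>1, \<alpha>\<^sub>2}. (x, y) \<notin> F \<alpha>'"
  proof cases
    case 1
    then show ?thesis
      using assms(5) F1 F_other by (cases "\<alpha> = \<alpha>\<^sub>1") (auto simp: mem_hs_lex)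
  next
    case 2
    then show ?thesis
      using incomparable1 assms(5) by blast
  next
    case 3
    then show ?thesis
      by blast
  next
    case 4
    show ?thesis
    proof (cases "(x, y) \<in> \<alpha>\<^sub>1 \<or> (y, x) \<in> \<alpha>\<^sub>1")
      case True
      then have "(y, x) \<in> F \<alpha>\<^sub>1"
        using 4 by (auto simp: B_def F1 mem_hs_lex)
      then show ?thesis
        using linear_order_on'_asymD[OF lin(1) _ \<open>x \<noteq> y\<close>] by blast
    next
      case False
      then show ?thesis
        using incomparable1 by blast
    qed
  qed
  then show ?thesis
    by (simp add: F_def)
qed

lemma order_realizer_image_if_hs_realizer:
  assumes po: "partial_order_on' A \<gamma>" and X: "hs_realizer A \<gamma> X"
    and \<alpha>12: "\<alpha>\<^sub>1 \<in> X" "\<alpha>\<^sub>2 \<in> X" "\<alpha>\<^sub>1 \<noteq> \<alpha>\<^sub>2"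
  shows "\<exists>F. order_realizer A \<gamma> (F ` X)"
proof -
  obtain M where M: "linear_extension A \<gamma> M"
    using Szpilrajn[OF po] by blast
  have hs: "half_space A \<alpha>" "\<gamma> \<subseteq> \<alpha>" if "\<alpha> \<in> X" for \<alpha>
    using X that by (auto simp: hs_realizer_def rel_Inter_def)
  have M_lin: "linear_order_on' A M"
    using M by (simp add: linear_extension_def)
  have "order_realizer A \<gamma> (hs_lex_family A M \<alpha>\<^sub>1 \<alpha>\<^sub>2 ` X)"
  proof (rule order_realizerI)
    show "\<gamma> \<subseteq> A \<times> A"
      using po by (simp add: order_on'_defs)
    show "linear_extension A \<gamma> L" if L: "L \<in> hs_lex_family A M \<alpha>\<^sub>1 \<alpha>\<^sub>2 ` X" for L
    proof -
      obtain \<alpha> where "\<alpha> \<in> X" "L = hs_lex_family A M \<alpha>\<^sub>1 \<alpha>\<^sub>2 \<alpha>"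
        using L by blast
      moreover have "\<gamma> \<subseteq> hs_lex A \<alpha> M S" for S
        using subset_hs_lex[OF hs[OF \<open>\<alpha> \<in> X\<close>]] M by (simp add: linear_extension_def)
      then have "\<gamma> \<subseteq> hs_lex_family A M \<alpha>\<^sub>1 \<alpha>\<^sub>2 \<alpha>"
        by (simp add: hs_lex_family_def Let_def)
      ultimately show ?thesis
        using linear_order_on'_hs_lex_family[OF hs(1) hs(1) hs(1) M_lin] \<alpha>12 \<open>\<alpha> \<in> X\<close>
        by (simp add: linear_extension_def)
    qed
    fix x y assume xy: "x \<in> A" "y \<in> A" "(x, y) \<notin> \<gamma>"
    then have "x \<noteq> y"
      using po by (auto simp: order_on'_defs refl_on_def)
    obtain \<alpha> where "\<alpha> \<in> X" "(x, y) \<notin> \<alpha>"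
      using X xy by (auto simp: hs_realizer_def rel_Inter_def)
    then obtain \<alpha>' where "\<alpha>' \<in> X" "(x, y) \<notin> hs_lex_family A M \<alpha>\<^sub>1 \<alpha>\<^sub>2 \<alpha>'"
      using hs_lex_family_reverses[OF hs(1)[OF \<alpha>12(1)] hs(1)[OF \<alpha>12(2)] \<alpha>12(3) M_lin _ \<open>x \<noteq> y\<close>]
        \<alpha>12 by blast
    then show "\<exists>L\<in>hs_lex_family A M \<alpha>\<^sub>1 \<alpha>\<^sub>2 ` X. (x, y) \<notin> L"
      by blast
  qed
  then show ?thesis
    by blast
qed

lemma card_of_SOME_minimal:
  fixes P :: "'b set \<Rightarrow> bool"
  assumes "P Y"
  defines "X \<equiv> SOME X. P X \<and> (\<forall>Z. P Z \<longrightarrow> |X| \<le>o |Z| )"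
  shows "P X \<and> (\<forall>Z. P Z \<longrightarrow> |X| \<le>o |Z| )"
proof -
  have "\<exists>r \<in> card_of ` Collect P. \<forall>r' \<in> card_of ` Collect P. r \<le>o r'"
    using assms(1) card_of_Well_order by (intro exists_minim_Well_order) auto
  then have "\<exists>X. P X \<and> (\<forall>Z. P Z \<longrightarrow> |X| \<le>o |Z| )"
    by blast
  then show ?thesis
    unfolding X_def by (rule someI_ex)
qed

lemma hsdim_le:
  "hs_realizer A \<gamma> Z \<Longrightarrow> hsdim A \<gamma> \<le>o |Z|"
  unfolding hsdim_def using card_of_SOME_minimal[of "hs_realizer A \<gamma>"] by blast

lemma odim_le:
  "order_realizer A \<gamma> Z \<Longrightarrow> odim A \<gamma> \<le>o |Z|"
  unfolding odim_def using card_of_SOME_minimal[of "order_realizer A \<gamma>"] by blast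

lemma odim_attained:
  assumes "partial_order_on' A \<gamma>"
  shows "\<exists>Y. order_realizer A \<gamma> Y \<and> odim A \<gamma> = |Y|"
  unfolding odim_def
  using card_of_SOME_minimal[of "order_realizer A \<gamma>", OF order_realizer_linear_extensions[OF assms]]
  by blast

lemma hsdim_attained:
  assumes "partial_order_on' A \<gamma>"
  shows "\<exists>X. hs_realizer A \<gamma> X \<and> hsdim A \<gamma> = |X|"
  unfolding hsdim_def
  using card_of_SOME_minimal[of "hs_realizer A \<gamma>", OF hs_realizer_if_order_realizer,
      OF order_realizer_linear_extensions[OF assms]]
  by blast

lemma hsdim_le_odim:
  assumes "partial_order_on' A \<gamma>"
  shows "hsdim A \<gamma> \<le>o odim A \<gamma>"
proof -
  obtain Y where "order_realizer A \<gamma> Y" "odim A \<gamma> = |Y|"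
    using odim_attained[OF assms] by blast
  then show ?thesis
    using hsdim_le[OF hs_realizer_if_order_realizer] by simp
qed

lemma half_space_if_hsdim_one:
  assumes "partial_order_on' A \<gamma>" "hsdim A \<gamma> =o |{1::nat}|"
  shows "half_space A \<gamma>"
proof -
  obtain X where X: "hs_realizer A \<gamma> X" "hsdim A \<gamma> = |X|"
    using hsdim_attained[OF assms(1)] by blast
  then have "X \<approx> {1::nat}"
    using assms(2) by (simp add: eqpoll_iff_card_of_ordIso)
  then obtain \<alpha> where "X = {\<alpha>}"
    by (auto simp: eqpoll_singleton_iff)
  moreover have "\<alpha> \<subseteq> A \<times> A" if "half_space A \<alpha>" for \<alpha>
    using that by (simp add: half_space_def quasiorder_on_def)
  ultimately show ?thesis
    using X(1) by (auto simp: hs_realizer_def rel_Inter_def Int_absorb1)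
qed

lemma linear_order_on'_if_order_realizer_subsingleton:
  assumes "partial_order_on' A \<gamma>" "order_realizer A \<gamma> Y" "\<forall>L\<in>Y. \<forall>L'\<in>Y. L = L'"
  shows "linear_order_on' A \<gamma>"
proof -
  have "total_on A \<gamma>"
  proof (cases "Y = {}")
    case True
    then show ?thesis
      using assms(2) by (auto simp: order_realizer_def rel_Inter_def total_on_def)
  next
    case False
    then obtain L where "Y = {L}"
      using assms(3) by blast
    then show ?thesis
      using assms(2)
      by (auto simp: order_realizer_def rel_Inter_def linear_extension_def order_on'_defs total_on_def)
  qed
  with assms(1) show ?thesis
    by (simp add: linear_order_on'_def)
qed

lemma odim_le_one_if_linear:
  assumes "linear_order_on' A \<gamma>"
  shows "odim A \<gamma> \<le>o |{1::nat}|"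
proof -
  have "order_realizer A \<gamma> {\<gamma>}"
    using assms by (auto simp: order_realizer_def linear_extension_def rel_Inter_def order_on'_defs)
  then have "odim A \<gamma> \<le>o |{\<gamma>}|"
    by (rule odim_le)
  moreover have "|{\<gamma>}| =o |{1::nat}|"
    using singleton_eqpoll by (simp add: eqpoll_iff_card_of_ordIso)
  ultimately show ?thesis
    by (rule ordLeq_ordIso_trans)
qed

lemma odim_two_if_half_space:
  assumes "partial_order_on' A \<gamma>" "half_space A \<gamma>" "\<not> linear_order_on' A \<gamma>"
  shows "odim A \<gamma> =o |{1::nat, 2}|"
proof -
  obtain L1 L2 where "order_realizer A \<gamma> {L1, L2}"
    using order_realizer_pair_if_half_space[OF assms(1,2)] by blast
  then have "odim A \<gamma> \<le>o |{L1, L2}|"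
    by (rule odim_le)
  moreover obtain Y where Y: "order_realizer A \<gamma> Y" "odim A \<gamma> = |Y|"
    using odim_attained[OF assms(1)] by blast
  ultimately have "|Y| \<le>o |{L1, L2}|"
    by simp
  then have "finite Y" "card Y \<le> card {L1, L2}"
    using card_of_ordLeq_finite lepoll_iff_card_le[of Y "{L1, L2}"]
    by (auto simp: lepoll_def card_of_ordLeq[symmetric])
  moreover have "card {L1, L2} \<le> 2"
    by (simp add: card_insert_if)
  moreover have "\<not> card Y \<le> 1"
    using linear_order_on'_if_order_realizer_subsingleton[OF assms(1) Y(1)] assms(3) \<open>finite Y\<close>
    by (auto simp: card_le_Suc0_iff_eq)
  ultimately have "Y \<approx> {1::nat, 2}"
    by (simp add: eqpoll_iff_card)
  then show ?thesis
    using Y(2) by (simp add: eqpoll_iff_card_of_ordIso)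
qed

lemma odim_eq_hsdim:
  assumes "partial_order_on' A \<gamma>" "|{1::nat, 2}| \<le>o hsdim A \<gamma>"
  shows "odim A \<gamma> =o hsdim A \<gamma>"
proof -
  obtain X where X: "hs_realizer A \<gamma> X" "hsdim A \<gamma> = |X|"
    using hsdim_attained[OF assms(1)] by blast
  then obtain f where "inj_on f {1::nat, 2}" "f ` {1, 2} \<subseteq> X"
    using assms(2) card_of_ordLeq[of "{1::nat, 2}" X] by auto
  then have "f 1 \<in> X" "f 2 \<in> X" "f 1 \<noteq> f 2"
    by (auto simp: inj_on_def)
  then obtain F where "order_realizer A \<gamma> (F ` X)"
    using order_realizer_image_if_hs_realizer[OF assms(1) X(1)] by blast
  then have "odim A \<gamma> \<le>o |F ` X|"
    by (rule odim_le)
  then have "odim A \<gamma> \<le>o hsdim A \<gamma>"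
    unfolding X(2) using card_of_image by (rule ordLeq_transitive)
  then show ?thesis
    using hsdim_le_odim[OF assms(1)] ordIso_iff_ordLeq by blast
qed

theorem theorem2p16:
  fixes A :: "'a set" and \<gamma> :: "'a rel"
  assumes "partial_order_on' A \<gamma>"
  shows "((hsdim A \<gamma>, card_of {1::nat}) \<in> ordIso \<longrightarrow>
            half_space A \<gamma> \<and>
            (linear_order_on' A \<gamma> \<longrightarrow> (odim A \<gamma>, card_of {1::nat}) \<in> ordIso) \<and>
            (\<not> linear_order_on' A \<gamma> \<longrightarrow> (odim A \<gamma>, card_of {1::nat, 2}) \<in> ordIso))
       \<and> ((card_of {1::nat, 2}, hsdim A \<gamma>) \<in> ordLeq \<longrightarrow> (odim A \<gamma>, hsdim A \<gamma>) \<in> ordIso)"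
proof (intro conjI impI)
  assume hsdim_one: "hsdim A \<gamma> =o |{1::nat}|"
  then show half_space: "half_space A \<gamma>"
    using half_space_if_hsdim_one[OF assms] by blast
  show "odim A \<gamma> =o |{1::nat}|" if "linear_order_on' A \<gamma>"
  proof -
    have "|{1::nat}| \<le>o odim A \<gamma>"
      using ordIso_ordLeq_trans[OF ordIso_symmetric[OF hsdim_one] hsdim_le_odim[OF assms]] .
    then show ?thesis
      using odim_le_one_if_linear[OF that] ordIso_iff_ordLeq by blast
  qed
  show "odim A \<gamma> =o |{1::nat, 2}|" if "\<not> linear_order_on' A \<gamma>"
    using odim_two_if_half_space[OF assms half_space that] .
next
  show "|{1::nat, 2}| \<le>o hsdim A \<gamma> \<Longrightarrow> odim A \<gamma> =o hsdim A \<gamma>"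
    using odim_eq_hsdim[OF assms] .
qed

end
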